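(* Let $A\in\mathbb{R}^{m\times n}$ and $b\in\mathbb{R}^m$ be such that $S_+=\{z\in\mathbb{R}^n_+ : Az=b\}$ is nonempty, and let $x_0\in\mathbb{R}^n_{++}$. Let $(x_k)$ be generated by ("Hadamard descent+") $$\alpha_k=\min\left\{\frac{f(x_k)}{\|\nabla f(x_k)\|^2_{x_k}},\ \frac{1.79}{\|\nabla f(x_k)\|_\infty}\right\},\qquad x_{k+1}=x_k\circ\big(\mathbf{1}-\alpha_k\nabla f(x_k)+\alpha_k^2\nabla f(x_k)^2\big),$$ with $f(x)=\frac12\|Ax-b\|_2^2$ (if $\nabla f(x_k)=0$ the sequence is kept constant from then on). Then $(x_k)$ converges to some $x^*\in S_+$, and for all $k\ge0$ $$\min_{0\le i\le k} f(x_i)\le \frac{4R\,(R+\|x^*\|_1)\max_{j\le n}\|A_{:j}\|_2^2}{k+1},\qquad R=D_h(x^*,x_0).$$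
   Context: $\mathbb{R}^n_{++}$ is the strictly positive orthant; $\circ$ is componentwise multiplication and $\nabla f(x_k)^2$ is the componentwise square; $\mathbf{1}$ the all-ones vector; $\nabla f(x)=A^\top(Ax-b)$; $\|v\|_x^2=\sum_i x_iv_i^2$; $A_{:j}$ is the $j$-th column of $A$. $h(x)=\sum_i x_i(\log x_i-1)$ (with $0\log0=0$) and $D_h(x,y)=\sum_i\big(x_i\log\frac{x_i}{y_i}-x_i+y_i\big)$ for $x\in\mathbb{R}^n_+$, $y\in\mathbb{R}^n_{++}$. *)

theory Defs
  imports "HOL-Analysis.Analysis"
begin

definition lsq_f :: "real^'n^'m \<Rightarrow> real^'m \<Rightarrow> real^'n \<Rightarrow> real" where
  "lsq_f A b x = (1/2) * (norm (A *v x - b))\<^sup>2"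

definition lsq_grad :: "real^'n^'m \<Rightarrow> real^'m \<Rightarrow> real^'n \<Rightarrow> real^'n" where
  "lsq_grad A b x = transpose A *v (A *v x - b)"

definition local_norm_sq :: "real^'n \<Rightarrow> real^'n \<Rightarrow> real" where
  "local_norm_sq x v = (\<Sum>i\<in>UNIV. x$i * (v$i)\<^sup>2)"

definition sup_norm :: "real^'n \<Rightarrow> real" where
  "sup_norm v = Max ((\<lambda>i. \<bar>v$i\<bar>) ` UNIV)"

definition one_norm :: "real^'n \<Rightarrow> real" where
  "one_norm v = (\<Sum>i\<in>UNIV. \<bar>v$i\<bar>)"

definition hd_step_size :: "real^'n^'m \<Rightarrow> real^'m \<Rightarrow> real^'n \<Rightarrow> real" where
  "hd_step_size A b x =
     min (lsq_f A b x / local_norm_sq x (lsq_grad A b x)) (1.79 / sup_norm (lsq_grad A b x))"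

definition hd_update :: "real^'n^'m \<Rightarrow> real^'m \<Rightarrow> real^'n \<Rightarrow> real^'n" where
  "hd_update A b x =
     (if lsq_grad A b x = 0 then x
      else (let g = lsq_grad A b x; a = hd_step_size A b x
            in \<chi> i. x$i * (1 - a * g$i + a\<^sup>2 * (g$i)\<^sup>2)))"

text \<open>Bregman divergence of the entropy h(x) = sum x_i (log x_i - 1); note 0 * ln(0/y) = 0 in HOL,
  matching the convention 0 log 0 = 0.\<close>
definition bregman_ent :: "real^'n \<Rightarrow> real^'n \<Rightarrow> real" where
  "bregman_ent x y = (\<Sum>i\<in>UNIV. x$i * ln (x$i / y$i) - x$i + y$i)"

definition max_col_norm_sq :: "real^'n^'m \<Rightarrow> real" where
  "max_col_norm_sq A = Max ((\<lambda>j. \<Sum>i\<in>UNIV. (A$i$j)\<^sup>2) ` UNIV)"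

definition feasible_set :: "real^'n^'m \<Rightarrow> real^'m \<Rightarrow> (real^'n) set" where
  "feasible_set A b = {z. (\<forall>i. z$i \<ge> 0) \<and> A *v z = b}"

end

theory Submission
  imports Defs
begin

text \<open>The entropic Bregman divergence D(z, x_k) to any feasible point z is a Lyapunov function.
  Since |a_k g_i| \<le> 1.79, the factor 1 - t + t^2 of the update dominates exp(-t), so one step
  decreases D(z, -) by at least a_k (2 f(x_k)) - a_k^2 ||g||_{x_k}^2 \<ge> a_k f(x_k).
  The iterates stay in the bounded set {x. D(z, x) \<le> R}, on which both step size candidates are
  at least 1 / (4 L (R + ||z||_1)); telescoping gives the rate.  Hence f is summable, a limit point
  x* of the bounded iterates is feasible, and D(x*, x_k), being nonincreasing and tending to 0
  along a subsequence, tends to 0, which forces x_k \<rightarrow> x*.\<close>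

subsection \<open>Scalar inequalities\<close>

lemma exp_179_le: "exp (179/100::real) \<le> 59941/10000"
proof -
  define x :: real where "x = 179/100"
  obtain t where t: "\<bar>t\<bar> \<le> \<bar>x\<bar>" "exp x = (\<Sum>m<10. x ^ m / fact m) + exp t / fact 10 * x ^ 10"
    using Maclaurin_exp_le[of x 10] by blast
  have "exp t \<le> exp x" using t(1) by (simp add: x_def)
  hence "exp t / fact 10 * x ^ 10 \<le> exp x / fact 10 * x ^ 10"
    by (intro mult_right_mono divide_right_mono) (auto simp: x_def)
  hence "exp x \<le> (\<Sum>m<10. x ^ m / fact m) + exp x / fact 10 * x ^ 10"
    using t(2) by linarith
  hence "exp x * (1 - x ^ 10 / fact 10) \<le> (\<Sum>m<10. x ^ m / fact m)"
    by (simp add: algebra_simps)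
  also have "(\<Sum>m<10. x ^ m / fact m) = (\<Sum>m\<in>{0,1,2,3,4,5,6,7,8,9}. x ^ m / fact m)"
    by (rule sum.cong) auto
  also have "\<dots> \<le> 59894/10000"
    by (simp add: x_def fact_numeral power_divide)
  finally have upper: "exp x * (1 - x ^ 10 / fact 10) \<le> 59894/10000" .
  have "x ^ 10 / fact 10 \<le> 1/10000"
    by (simp add: x_def fact_numeral power_divide)
  hence "exp x * (9999/10000) \<le> exp x * (1 - x ^ 10 / fact 10)"
    by (intro mult_left_mono) auto
  hence "exp x * (9999/10000) \<le> 59894/10000" using upper by (rule order_trans)
  thus ?thesis unfolding x_def by simp
qed

text \<open>This is where the constant 1.79 of the step size comes from: the inequality fails
  shortly after s = 1.79.\<close>
lemma exp_le_one_plus_sq: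
  fixes s :: real assumes "0 \<le> s" "s \<le> 179/100" shows "exp s \<le> 1 + s + s\<^sup>2"
proof -
  define F where "F = (\<lambda>s::real. (1 + s + s\<^sup>2) * exp (-s))"
  have D: "DERIV F x :> (x * (1 - x)) * exp (-x)" for x
    unfolding F_def by (rule derivative_eq_intros refl | simp)+ (simp add: algebra_simps power2_eq_square)
  have "1 \<le> F s"
  proof (cases "s \<le> 1")
    case True
    have "F 0 \<le> F s"
      by (rule DERIV_nonneg_imp_nondecreasing[OF assms(1)])
         (use D True in \<open>auto intro!: exI mult_nonneg_nonneg\<close>)
    thus ?thesis by (simp add: F_def)
  next
    case False
    have np: "x * (1 - x) * exp (-x) \<le> 0" if "1 \<le> x" for x :: real
      using that by (intro mult_nonpos_nonneg mult_nonneg_nonpos) auto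
    have "F (179/100) \<le> F s"
      by (rule DERIV_nonpos_imp_nonincreasing[OF assms(2)]) (use D False np in force)
    moreover have "1 \<le> F (179/100)"
      using exp_179_le by (simp add: F_def exp_minus field_simps power2_eq_square)
    ultimately show ?thesis by simp
  qed
  thus ?thesis by (simp add: F_def exp_minus field_simps)
qed

lemma exp_minus_le_one_minus_plus_sq:
  fixes t :: real assumes "0 \<le> t" shows "exp (-t) \<le> 1 - t + t\<^sup>2"
proof -
  define G where "G = (\<lambda>s::real. (1 - s + s\<^sup>2) * exp s)"
  have D: "DERIV G x :> (x + x\<^sup>2) * exp x" for x
    unfolding G_def by (rule derivative_eq_intros refl | simp)+ (simp add: algebra_simps power2_eq_square)
  have "G 0 \<le> G t"
    by (rule DERIV_nonneg_imp_nondecreasing[OF assms]) (use D in \<open>auto intro!: exI\<close>)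
  thus ?thesis by (simp add: G_def exp_minus field_simps)
qed

lemma one_minus_plus_sq_pos: "0 < 1 - t + (t::real)\<^sup>2"
  using sum_power2_ge_zero[of "t - 1/2" 0] by (simp add: power2_eq_square algebra_simps)

lemma minus_le_ln_one_minus_plus_sq:
  fixes t :: real assumes "\<bar>t\<bar> \<le> 179/100" shows "-t \<le> ln (1 - t + t\<^sup>2)"
proof -
  have "exp (-t) \<le> 1 - t + t\<^sup>2"
  proof (cases "t \<ge> 0")
    case True thus ?thesis by (rule exp_minus_le_one_minus_plus_sq)
  next
    case False thus ?thesis using exp_le_one_plus_sq[of "-t"] assms by simp
  qed
  thus ?thesis using one_minus_plus_sq_pos by (simp add: ln_ge_iff)
qed

lemma ln_le_half: fixes z :: real assumes "0 < z" shows "ln z \<le> z / 2"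
proof -
  have "ln z = 2 * ln (sqrt z)" using assms by (simp add: ln_sqrt)
  also have "\<dots> \<le> 2 * (sqrt z - 1)" using ln_le_minus_one[of "sqrt z"] assms by simp
  also have "\<dots> \<le> z / 2"
    using sum_power2_ge_zero[of "sqrt z - 2" 0] assms by (simp add: power2_eq_square algebra_simps)
  finally show ?thesis .
qed

subsection \<open>The entropic Bregman divergence\<close>

lemma sq_sqrt_diff_le_bregman_term:
  fixes u y :: real assumes "0 \<le> u" "0 < y"
  shows "(sqrt u - sqrt y)\<^sup>2 \<le> u * ln (u / y) - u + y"
proof (cases "u = 0")
  case True thus ?thesis using assms by simp
next
  case False
  hence u: "0 < u" using assms by simp
  have "ln (sqrt y / sqrt u) \<le> sqrt y / sqrt u - 1" using ln_le_minus_one u assms by simp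
  hence "2 * (1 - sqrt y / sqrt u) \<le> ln (u / y)"
    using u assms by (simp add: ln_div ln_sqrt)
  hence "u * (2 * (1 - sqrt y / sqrt u)) \<le> u * ln (u / y)" using u by (simp add: mult_left_mono)
  moreover have "u * (2 * (1 - sqrt y / sqrt u)) = 2 * u - 2 * sqrt u * sqrt y"
    using u by (simp add: field_simps)
  moreover have "(sqrt u - sqrt y)\<^sup>2 = u - 2 * sqrt u * sqrt y + y"
    using u assms by (simp add: power2_diff)
  ultimately show ?thesis by linarith
qed

lemma half_minus_le_bregman_term:
  fixes u y :: real assumes "0 \<le> u" "0 < y"
  shows "y / 2 - u \<le> u * ln (u / y) - u + y"
proof (cases "u = 0")
  case True thus ?thesis using assms by simp
next
  case False
  hence u: "0 < u" using assms by simp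
  have "u * ln (y / u) \<le> u * ((y / u) / 2)"
    using ln_le_half[of "y / u"] u assms by (intro mult_left_mono) auto
  moreover have "ln (u / y) = - ln (y / u)" using u assms by (simp add: ln_div)
  ultimately show ?thesis using u by simp
qed

lemma bregman_term_nonneg:
  fixes u y :: real assumes "0 \<le> u" "0 < y" shows "0 \<le> u * ln (u / y) - u + y"
  using order_trans[OF zero_le_power2 sq_sqrt_diff_le_bregman_term[OF assms]] .

lemma bregman_ent_nonneg:
  assumes "\<forall>i. 0 \<le> z$i" "\<forall>i. 0 < y$i" shows "0 \<le> bregman_ent z y"
  unfolding bregman_ent_def using assms by (intro sum_nonneg bregman_term_nonneg) auto

lemma sq_sqrt_diff_le_bregman_ent:
  assumes "\<forall>i. 0 \<le> z$i" "\<forall>i. 0 < y$i"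
  shows "(sqrt (z$i) - sqrt (y$i))\<^sup>2 \<le> bregman_ent z y"
proof -
  have "(sqrt (z$i) - sqrt (y$i))\<^sup>2 \<le> z$i * ln (z$i / y$i) - z$i + y$i"
    using sq_sqrt_diff_le_bregman_term assms by auto
  also have "\<dots> \<le> bregman_ent z y" unfolding bregman_ent_def
    by (rule member_le_sum[where f="\<lambda>i. z$i * ln (z$i / y$i) - z$i + y$i"])
       (use assms bregman_term_nonneg in auto)
  finally show ?thesis .
qed

lemma sum_le_bregman_ent_one_norm:
  assumes "\<forall>i. 0 \<le> z$i" "\<forall>i. 0 < y$i"
  shows "(\<Sum>i\<in>UNIV. y$i) \<le> 2 * (bregman_ent z y + one_norm z)"
proof -
  have "(\<Sum>i\<in>UNIV. y$i / 2 - z$i) \<le> bregman_ent z y"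
    unfolding bregman_ent_def by (rule sum_mono) (use half_minus_le_bregman_term assms in auto)
  moreover have "one_norm z = (\<Sum>i\<in>UNIV. z$i)" using assms by (simp add: one_norm_def)
  ultimately show ?thesis by (simp add: sum_subtractf sum_divide_distrib[symmetric])
qed

lemma bregman_ent_one_norm_pos:
  assumes "\<forall>i. 0 \<le> z$i" "\<forall>i. 0 < y$i" shows "0 < bregman_ent z y + one_norm z"
proof -
  have "0 < (\<Sum>i\<in>UNIV. y$i)" using assms by (intro sum_pos) auto
  hence "0 < 2 * (bregman_ent z y + one_norm z)"
    using sum_le_bregman_ent_one_norm[OF assms] by (rule order_less_le_trans)
  thus ?thesis by simp
qed

lemma tendsto_bregman_ent_limit:
  assumes pos: "\<And>j. \<forall>i. 0 < y j $ i" and lim: "y \<longlonglongrightarrow> l"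
  shows "(\<lambda>j. bregman_ent l (y j)) \<longlonglongrightarrow> 0"
proof -
  have "(\<lambda>j. l$i * ln (l$i / y j $ i) - l$i + y j $ i) \<longlonglongrightarrow> 0" for i
  proof (cases "l$i = 0")
    case True thus ?thesis using tendsto_vec_nth[OF lim, of i] by simp
  next
    case False
    have "(\<lambda>j. l$i * ln (l$i / y j $ i) - l$i + y j $ i) \<longlonglongrightarrow> l$i * ln (l$i / l$i) - l$i + l$i"
      using False by (intro tendsto_intros tendsto_vec_nth[OF lim]) auto
    thus ?thesis using False by simp
  qed
  thus ?thesis unfolding bregman_ent_def by (rule tendsto_null_sum)
qed

lemma tendsto_of_bregman_ent_tendsto_0:
  assumes l: "\<forall>i. 0 \<le> l$i" and pos: "\<And>k. \<forall>i. 0 < y k $ i"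
    and D: "(\<lambda>k. bregman_ent l (y k)) \<longlonglongrightarrow> 0"
  shows "y \<longlonglongrightarrow> l"
proof (rule vec_tendstoI)
  fix i
  have "(\<lambda>k. (sqrt (l$i) - sqrt (y k $ i))\<^sup>2) \<longlonglongrightarrow> 0"
    by (rule tendsto_sandwich[of "\<lambda>_. 0" _ _ "\<lambda>k. bregman_ent l (y k)"])
       (use D sq_sqrt_diff_le_bregman_ent[OF l pos] in auto)
  hence "(\<lambda>k. \<bar>sqrt (l$i) - sqrt (y k $ i)\<bar>) \<longlonglongrightarrow> 0"
    using tendsto_real_sqrt by fastforce
  hence "(\<lambda>k. sqrt (l$i) - sqrt (y k $ i)) \<longlonglongrightarrow> 0" by (rule tendsto_rabs_zero_cancel)
  hence "(\<lambda>k. sqrt (l$i) - (sqrt (l$i) - sqrt (y k $ i))) \<longlonglongrightarrow> sqrt (l$i) - 0"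
    by (intro tendsto_intros)
  hence "(\<lambda>k. (sqrt (y k $ i))\<^sup>2) \<longlonglongrightarrow> (sqrt (l$i))\<^sup>2" by (simp add: tendsto_power)
  thus "(\<lambda>k. y k $ i) \<longlonglongrightarrow> l $ i" using l pos by (simp add: less_imp_le)
qed

subsection \<open>Multiplicative updates with a quadratic factor\<close>

definition quad_mult_update :: "real \<Rightarrow> real^'n \<Rightarrow> real^'n \<Rightarrow> real^'n" where
  "quad_mult_update a g x = (\<chi> i. x$i * (1 - a * g$i + (a * g$i)\<^sup>2))"

lemma quad_mult_update_pos:
  assumes "\<forall>i. 0 < x$i" shows "\<forall>i. 0 < quad_mult_update a g x $ i"
  using assms one_minus_plus_sq_pos by (simp add: quad_mult_update_def)

lemma bregman_ent_quad_mult_update_le: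
  assumes x: "\<forall>i. 0 < x$i" and z: "\<forall>i. 0 \<le> z$i" and small: "\<forall>i. \<bar>a * g$i\<bar> \<le> 179/100"
  shows "bregman_ent z (quad_mult_update a g x)
           \<le> bregman_ent z x - a * (g \<bullet> (x - z)) + a\<^sup>2 * local_norm_sq x g"
proof -
  define \<phi> where "\<phi> i = 1 - a * g$i + (a * g$i)\<^sup>2" for i
  have \<phi>: "0 < \<phi> i" for i unfolding \<phi>_def by (rule one_minus_plus_sq_pos)
  have bound: "z$i * ln (z$i / (x$i * \<phi> i)) - z$i + x$i * \<phi> i
      \<le> (z$i * ln (z$i / x$i) - z$i + x$i) + (z$i * (a * g$i) - x$i * (a * g$i) + x$i * (a * g$i)\<^sup>2)" for i
  proof (cases "z$i = 0")
    case True
    thus ?thesis by (simp add: \<phi>_def algebra_simps)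
  next
    case False
    hence zi: "0 < z$i" using z by (simp add: less_le)
    have "ln (z$i / (x$i * \<phi> i)) = ln (z$i / x$i) - ln (\<phi> i)"
      using zi x \<phi>[of i] by (simp add: ln_div ln_mult less_imp_neq[symmetric])
    moreover have "z$i * (- (a * g$i)) \<le> z$i * ln (\<phi> i)"
      unfolding \<phi>_def using zi small minus_le_ln_one_minus_plus_sq by (intro mult_left_mono) auto
    moreover have "x$i * \<phi> i = x$i - x$i * (a * g$i) + x$i * (a * g$i)\<^sup>2"
      by (simp add: \<phi>_def algebra_simps)
    ultimately show ?thesis by (simp add: right_diff_distrib)
  qed
  have "bregman_ent z (quad_mult_update a g x) \<le> (\<Sum>i\<in>UNIV. (z$i * ln (z$i / x$i) - z$i + x$i)
          + (z$i * (a * g$i) - x$i * (a * g$i) + x$i * (a * g$i)\<^sup>2))"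
    unfolding bregman_ent_def quad_mult_update_def
    by (rule sum_mono) (use bound in \<open>simp add: \<phi>_def\<close>)
  also have "\<dots> = bregman_ent z x - a * (g \<bullet> (x - z)) + a\<^sup>2 * local_norm_sq x g"
    unfolding bregman_ent_def local_norm_sq_def inner_vec_def
    by (simp add: sum.distrib sum_subtractf sum_distrib_left power_mult_distrib algebra_simps)
  finally show ?thesis .
qed

subsection \<open>The least-squares objective\<close>

lemma feasible_set_nonneg: "z \<in> feasible_set A b \<Longrightarrow> \<forall>i. 0 \<le> z$i"
  by (simp add: feasible_set_def)

lemma lsq_f_nonneg: "0 \<le> lsq_f A b x"
  by (simp add: lsq_f_def)

lemma lsq_f_pos_if_grad_nonzero:
  assumes "lsq_grad A b x \<noteq> 0" shows "0 < lsq_f A b x"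
proof -
  have "A *v x - b \<noteq> 0" using assms by (auto simp: lsq_grad_def)
  thus ?thesis by (simp add: lsq_f_def)
qed

lemma inner_lsq_grad_diff_feasible:
  assumes "z \<in> feasible_set A b"
  shows "lsq_grad A b x \<bullet> (x - z) = 2 * lsq_f A b x"
proof -
  have "A *v (x - z) = A *v x - b"
    using assms by (simp add: feasible_set_def matrix_vector_mult_diff_distrib)
  thus ?thesis
    by (simp add: lsq_grad_def dot_lmul_matrix lsq_f_def power2_norm_eq_inner)
qed

lemma lsq_f_eq_0_if_grad_eq_0:
  assumes "z \<in> feasible_set A b" "lsq_grad A b x = 0" shows "lsq_f A b x = 0"
  using inner_lsq_grad_diff_feasible[OF assms(1), of x] assms(2) by simp

lemma norm_column_sq_le_max_col_norm_sq: "(norm (column j A))\<^sup>2 \<le> max_col_norm_sq A"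
proof -
  have "(norm (column j A))\<^sup>2 = (\<Sum>i\<in>UNIV. (A$i$j)\<^sup>2)"
    unfolding power2_norm_eq_inner by (simp add: inner_vec_def column_def power2_eq_square)
  also have "\<dots> \<le> max_col_norm_sq A" unfolding max_col_norm_sq_def by (rule Max_ge) auto
  finally show ?thesis .
qed

lemma max_col_norm_sq_nonneg: "0 \<le> max_col_norm_sq A"
  using order_trans[OF zero_le_power2 norm_column_sq_le_max_col_norm_sq] .

lemma max_col_norm_sq_pos_if_grad_nonzero:
  assumes "lsq_grad A b x \<noteq> 0" shows "0 < max_col_norm_sq A"
proof (rule ccontr)
  assume "\<not> 0 < max_col_norm_sq A"
  hence "(norm (column j A))\<^sup>2 \<le> 0" for j
    using norm_column_sq_le_max_col_norm_sq[of j A] by (meson not_less order_trans)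
  hence "\<forall>j. column j A = 0" by simp
  hence "A = 0" by (simp add: vec_eq_iff column_def)
  thus False using assms by (simp add: lsq_grad_def)
qed

lemma lsq_grad_nth: "lsq_grad A b x $ j = column j A \<bullet> (A *v x - b)"
  by (simp add: lsq_grad_def matrix_vector_mult_def transpose_def inner_vec_def column_def mult.commute)

lemma lsq_grad_nth_sq_le: "(lsq_grad A b x $ j)\<^sup>2 \<le> max_col_norm_sq A * (2 * lsq_f A b x)"
proof -
  have "\<bar>lsq_grad A b x $ j\<bar> \<le> norm (column j A) * norm (A *v x - b)"
    unfolding lsq_grad_nth by (rule Cauchy_Schwarz_ineq2)
  hence "(lsq_grad A b x $ j)\<^sup>2 \<le> (norm (column j A))\<^sup>2 * (norm (A *v x - b))\<^sup>2"
    by (metis abs_ge_zero power2_abs power_mono power_mult_distrib)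
  also have "\<dots> \<le> max_col_norm_sq A * (norm (A *v x - b))\<^sup>2"
    using norm_column_sq_le_max_col_norm_sq by (rule mult_right_mono) simp
  finally show ?thesis by (simp add: lsq_f_def)
qed

lemma abs_lsq_grad_nth_le:
  assumes "z \<in> feasible_set A b"
  shows "\<bar>lsq_grad A b x $ j\<bar> \<le> max_col_norm_sq A * (\<Sum>l\<in>UNIV. \<bar>x$l - z$l\<bar>)"
proof -
  define L where "L = max_col_norm_sq A"
  have col: "norm (column l A) \<le> sqrt L" for l
    unfolding L_def by (rule real_le_rsqrt[OF norm_column_sq_le_max_col_norm_sq])
  have "A *v x - b = A *v (x - z)"
    using assms by (simp add: feasible_set_def matrix_vector_mult_diff_distrib)
  also have "\<dots> = (\<Sum>l\<in>UNIV. (x$l - z$l) *\<^sub>R column l A)"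
    by (simp add: matrix_mult_sum scalar_mult_eq_scaleR)
  finally have "norm (A *v x - b) \<le> (\<Sum>l\<in>UNIV. norm ((x$l - z$l) *\<^sub>R column l A))"
    by (metis norm_sum)
  also have "\<dots> \<le> (\<Sum>l\<in>UNIV. \<bar>x$l - z$l\<bar> * sqrt L)"
    by (rule sum_mono) (simp add: col mult_left_mono)
  finally have res: "norm (A *v x - b) \<le> sqrt L * (\<Sum>l\<in>UNIV. \<bar>x$l - z$l\<bar>)"
    by (simp add: sum_distrib_left mult.commute)
  have "\<bar>lsq_grad A b x $ j\<bar> \<le> norm (column j A) * norm (A *v x - b)"
    unfolding lsq_grad_nth by (rule Cauchy_Schwarz_ineq2)
  also have "\<dots> \<le> sqrt L * (sqrt L * (\<Sum>l\<in>UNIV. \<bar>x$l - z$l\<bar>))"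
    by (rule mult_mono) (use col res max_col_norm_sq_nonneg in \<open>auto simp: L_def\<close>)
  finally show ?thesis
    using max_col_norm_sq_nonneg[of A] by (simp add: L_def mult.assoc[symmetric])
qed

lemma local_norm_sq_pos:
  assumes "\<forall>i. 0 < x$i" "v \<noteq> 0" shows "0 < local_norm_sq x v"
proof -
  obtain j where j: "v$j \<noteq> 0" using assms(2) by (auto simp: vec_eq_iff)
  have "0 < x$j * (v$j)\<^sup>2" using assms(1) j by simp
  also have "\<dots> \<le> local_norm_sq x v" unfolding local_norm_sq_def
    by (rule member_le_sum[where f="\<lambda>i. x$i * (v$i)\<^sup>2"]) (use assms(1) in \<open>simp_all add: less_imp_le\<close>)
  finally show ?thesis .
qed

lemma abs_le_sup_norm: "\<bar>v$i\<bar> \<le> sup_norm v"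
  unfolding sup_norm_def by (rule Max_ge) auto

lemma sup_norm_attained: "\<exists>i. sup_norm v = \<bar>v$i\<bar>"
proof -
  have "sup_norm v \<in> (\<lambda>i. \<bar>v$i\<bar>) ` UNIV" unfolding sup_norm_def by (rule Max_in) auto
  thus ?thesis by blast
qed

lemma sup_norm_pos:
  assumes "v \<noteq> 0" shows "0 < sup_norm v"
proof -
  obtain j where "v$j \<noteq> 0" using assms by (auto simp: vec_eq_iff)
  thus ?thesis using abs_le_sup_norm[of v j] by linarith
qed

text \<open>Both quantities entering the step size are controlled by D(z, x) through the bound
  sum_i x_i \<le> 2 (D(z, x) + ||z||_1).\<close>
lemma local_norm_sq_lsq_grad_le:
  assumes x: "\<forall>i. 0 < x$i" and z: "z \<in> feasible_set A b"
  shows "local_norm_sq x (lsq_grad A b x)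
           \<le> 4 * max_col_norm_sq A * lsq_f A b x * (bregman_ent z x + one_norm z)"
proof -
  define K where "K = max_col_norm_sq A * (2 * lsq_f A b x)"
  have K: "0 \<le> K" by (simp add: K_def max_col_norm_sq_nonneg lsq_f_nonneg)
  have "local_norm_sq x (lsq_grad A b x) \<le> (\<Sum>i\<in>UNIV. x$i * K)" unfolding local_norm_sq_def K_def
    by (rule sum_mono) (use x lsq_grad_nth_sq_le in \<open>auto intro: mult_left_mono less_imp_le\<close>)
  also have "\<dots> = K * (\<Sum>i\<in>UNIV. x$i)" by (simp add: sum_distrib_left mult.commute)
  also have "\<dots> \<le> K * (2 * (bregman_ent z x + one_norm z))"
    using sum_le_bregman_ent_one_norm[OF feasible_set_nonneg[OF z] x] K by (rule mult_left_mono)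
  finally show ?thesis by (simp add: K_def algebra_simps)
qed

lemma sup_norm_lsq_grad_le:
  assumes x: "\<forall>i. 0 < x$i" and z: "z \<in> feasible_set A b"
  shows "sup_norm (lsq_grad A b x) \<le> 3 * max_col_norm_sq A * (bregman_ent z x + one_norm z)"
proof -
  define L where "L = max_col_norm_sq A"
  have zn: "\<forall>i. 0 \<le> z$i" using feasible_set_nonneg[OF z] .
  have L: "0 \<le> L" by (simp add: L_def max_col_norm_sq_nonneg)
  obtain j where "sup_norm (lsq_grad A b x) = \<bar>lsq_grad A b x $ j\<bar>" using sup_norm_attained by blast
  also have "\<dots> \<le> L * (\<Sum>l\<in>UNIV. \<bar>x$l - z$l\<bar>)" unfolding L_def by (rule abs_lsq_grad_nth_le[OF z])
  also have "\<dots> \<le> L * ((\<Sum>l\<in>UNIV. x$l) + one_norm z)"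
  proof -
    have "(\<Sum>l\<in>UNIV. \<bar>x$l - z$l\<bar>) \<le> (\<Sum>l\<in>UNIV. x$l + z$l)"
      by (rule sum_mono) (use x zn in \<open>simp add: abs_le_iff less_imp_le\<close>)
    thus ?thesis using L zn by (simp add: one_norm_def sum.distrib mult_left_mono)
  qed
  also have "\<dots> \<le> L * (3 * (bregman_ent z x + one_norm z))"
    using sum_le_bregman_ent_one_norm[OF zn x] bregman_ent_nonneg[OF zn x] L
    by (intro mult_left_mono) auto
  finally show ?thesis by (simp add: L_def algebra_simps)
qed

lemma hd_update_eq_quad_mult_update:
  "lsq_grad A b x \<noteq> 0 \<Longrightarrow> hd_update A b x = quad_mult_update (hd_step_size A b x) (lsq_grad A b x) x"
  by (simp add: hd_update_def quad_mult_update_def Let_def power_mult_distrib)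

lemma hd_update_pos:
  assumes "\<forall>i. 0 < x$i" shows "\<forall>i. 0 < hd_update A b x $ i"
proof (cases "lsq_grad A b x = 0")
  case True thus ?thesis using assms by (simp add: hd_update_def)
next
  case False thus ?thesis using quad_mult_update_pos[OF assms] by (simp add: hd_update_eq_quad_mult_update)
qed

lemma hd_step_size_pos:
  assumes "\<forall>i. 0 < x$i" "lsq_grad A b x \<noteq> 0" shows "0 < hd_step_size A b x"
  using lsq_f_pos_if_grad_nonzero[OF assms(2)] local_norm_sq_pos[OF assms] sup_norm_pos[OF assms(2)]
  by (simp add: hd_step_size_def)

lemma abs_hd_step_size_mult_grad_le:
  assumes "\<forall>i. 0 < x$i" "lsq_grad A b x \<noteq> 0"
  shows "\<bar>hd_step_size A b x * lsq_grad A b x $ i\<bar> \<le> 179/100"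
proof -
  define g where "g = lsq_grad A b x"
  define a where "a = hd_step_size A b x"
  have a: "0 < a" unfolding a_def by (rule hd_step_size_pos[OF assms])
  have S: "0 < sup_norm g" unfolding g_def by (rule sup_norm_pos[OF assms(2)])
  have "\<bar>a * g$i\<bar> \<le> a * sup_norm g" using a abs_le_sup_norm[of g i] by (simp add: abs_mult)
  also have "\<dots> \<le> 179/100 / sup_norm g * sup_norm g"
    using S by (intro mult_right_mono) (simp_all add: a_def g_def hd_step_size_def)
  finally show ?thesis using S by (simp add: a_def g_def)
qed

lemma bregman_ent_hd_update_le:
  assumes x: "\<forall>i. 0 < x$i" and z: "z \<in> feasible_set A b" and g: "lsq_grad A b x \<noteq> 0"
  shows "bregman_ent z (hd_update A b x) \<le> bregman_ent z x - hd_step_size A b x * lsq_f A b x"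
proof -
  define a where "a = hd_step_size A b x"
  define N where "N = local_norm_sq x (lsq_grad A b x)"
  have a: "0 < a" unfolding a_def by (rule hd_step_size_pos[OF x g])
  have N: "0 < N" unfolding N_def by (rule local_norm_sq_pos[OF x g])
  have "a \<le> lsq_f A b x / N" by (simp add: a_def N_def hd_step_size_def)
  hence aN: "a * (a * N) \<le> a * lsq_f A b x" using a N by (simp add: field_simps)
  have "bregman_ent z (hd_update A b x) \<le> bregman_ent z x - a * (lsq_grad A b x \<bullet> (x - z)) + a\<^sup>2 * N"
    unfolding hd_update_eq_quad_mult_update[OF g] a_def N_def
    by (rule bregman_ent_quad_mult_update_le[OF x feasible_set_nonneg[OF z]])
       (use abs_hd_step_size_mult_grad_le[OF x g] in blast)
  also have "\<dots> = bregman_ent z x - a * (2 * lsq_f A b x) + a\<^sup>2 * N"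
    by (simp add: inner_lsq_grad_diff_feasible[OF z])
  also have "\<dots> \<le> bregman_ent z x - a * lsq_f A b x" using aN by (simp add: power2_eq_square)
  finally show ?thesis by (simp add: a_def)
qed

lemma hd_step_size_lower_bound:
  assumes x: "\<forall>i. 0 < x$i" and z: "z \<in> feasible_set A b" and g: "lsq_grad A b x \<noteq> 0"
  shows "1 \<le> 4 * max_col_norm_sq A * (bregman_ent z x + one_norm z) * hd_step_size A b x"
proof -
  define K where "K = 4 * max_col_norm_sq A * (bregman_ent z x + one_norm z)"
  have K: "0 < K" unfolding K_def
    using max_col_norm_sq_pos_if_grad_nonzero[OF g]
      bregman_ent_one_norm_pos[OF feasible_set_nonneg[OF z] x] by simp
  have N: "0 < local_norm_sq x (lsq_grad A b x)" by (rule local_norm_sq_pos[OF x g])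
  have S: "0 < sup_norm (lsq_grad A b x)" by (rule sup_norm_pos[OF g])
  have "local_norm_sq x (lsq_grad A b x) \<le> K * lsq_f A b x"
    using local_norm_sq_lsq_grad_le[OF x z] by (simp add: K_def algebra_simps)
  hence "1 \<le> K * (lsq_f A b x / local_norm_sq x (lsq_grad A b x))"
    using N by (simp add: field_simps)
  moreover have "sup_norm (lsq_grad A b x) \<le> K * (179/100)"
    using sup_norm_lsq_grad_le[OF x z] K by (simp add: K_def)
  hence "1 \<le> K * (179/100 / sup_norm (lsq_grad A b x))"
    using S by (simp add: field_simps)
  ultimately have "1 \<le> K * hd_step_size A b x" by (simp add: hd_step_size_def min_def)
  thus ?thesis by (simp add: K_def)
qed

locale hadamard_descent =
  fixes A :: "real^'n^'m" and b :: "real^'m" and x :: "nat \<Rightarrow> real^'n"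
  assumes feasible_nonempty: "feasible_set A b \<noteq> {}"
    and x0_pos: "\<forall>i. 0 < x 0 $ i"
    and iter: "\<And>k. x (Suc k) = hd_update A b (x k)"
begin

lemma iterates_pos: "\<forall>i. 0 < x k $ i"
  by (induction k) (simp_all add: x0_pos iter hd_update_pos)

lemma bregman_ent_iterates_nonneg: "z \<in> feasible_set A b \<Longrightarrow> 0 \<le> bregman_ent z (x k)"
  using bregman_ent_nonneg[OF feasible_set_nonneg iterates_pos] .

text \<open>The multiplicative form makes this uniform in k, including the steps where the gradient
  vanishes (then f(x_k) = 0) and the degenerate case A = 0.\<close>
lemma lsq_f_le_bregman_ent_decrease:
  assumes z: "z \<in> feasible_set A b"
  shows "lsq_f A b (x k) \<le> 4 * max_col_norm_sq A * (bregman_ent z (x k) + one_norm z)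
                              * (bregman_ent z (x k) - bregman_ent z (x (Suc k)))"
proof (cases "lsq_grad A b (x k) = 0")
  case True
  thus ?thesis using lsq_f_eq_0_if_grad_eq_0[OF z] by (simp add: iter hd_update_def)
next
  case False
  define K where "K = 4 * max_col_norm_sq A * (bregman_ent z (x k) + one_norm z)"
  have "1 * lsq_f A b (x k) \<le> K * hd_step_size A b (x k) * lsq_f A b (x k)"
    using hd_step_size_lower_bound[OF iterates_pos z False] lsq_f_nonneg
    unfolding K_def by (rule mult_right_mono)
  also have "\<dots> \<le> K * (bregman_ent z (x k) - bregman_ent z (x (Suc k)))"
  proof -
    have "0 \<le> K" unfolding K_def
      using max_col_norm_sq_nonneg[of A] bregman_ent_one_norm_pos[OF feasible_set_nonneg[OF z] iterates_pos]
      by (metis mult_nonneg_nonneg less_imp_le zero_le_numeral)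
    moreover have "hd_step_size A b (x k) * lsq_f A b (x k) \<le> bregman_ent z (x k) - bregman_ent z (x (Suc k))"
      using bregman_ent_hd_update_le[OF iterates_pos z False] by (simp add: iter)
    ultimately show ?thesis by (simp add: mult.assoc mult_left_mono)
  qed
  finally show ?thesis by (simp add: K_def)
qed

lemma bregman_ent_decseq:
  assumes z: "z \<in> feasible_set A b" shows "decseq (\<lambda>k. bregman_ent z (x k))"
proof (rule decseq_SucI)
  fix k
  show "bregman_ent z (x (Suc k)) \<le> bregman_ent z (x k)"
  proof (cases "lsq_grad A b (x k) = 0")
    case True thus ?thesis by (simp add: iter hd_update_def)
  next
    case False
    have "0 \<le> hd_step_size A b (x k) * lsq_f A b (x k)"
      using hd_step_size_pos[OF iterates_pos False] lsq_f_nonneg[of A b "x k"] by simp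
    thus ?thesis using bregman_ent_hd_update_le[OF iterates_pos z False] by (simp add: iter)
  qed
qed

lemma bregman_ent_le_initial: "z \<in> feasible_set A b \<Longrightarrow> bregman_ent z (x k) \<le> bregman_ent z (x 0)"
  using bregman_ent_decseq by (simp add: decseq_def)

lemma sum_lsq_f_le:
  assumes z: "z \<in> feasible_set A b"
  shows "(\<Sum>i<k. lsq_f A b (x i))
           \<le> 4 * max_col_norm_sq A * (bregman_ent z (x 0) + one_norm z) * bregman_ent z (x 0)"
proof -
  define K where "K = 4 * max_col_norm_sq A * (bregman_ent z (x 0) + one_norm z)"
  have K: "0 \<le> K" unfolding K_def
    using max_col_norm_sq_nonneg[of A] bregman_ent_one_norm_pos[OF feasible_set_nonneg[OF z] x0_pos]
    by simp
  have "(\<Sum>i<k. lsq_f A b (x i)) \<le> K * (bregman_ent z (x 0) - bregman_ent z (x k))"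
  proof (induction k)
    case (Suc k)
    have "4 * max_col_norm_sq A * (bregman_ent z (x k) + one_norm z) \<le> K"
      unfolding K_def using bregman_ent_le_initial[OF z, of k] max_col_norm_sq_nonneg[of A]
      by (intro mult_left_mono) auto
    moreover have "0 \<le> bregman_ent z (x k) - bregman_ent z (x (Suc k))"
      using bregman_ent_decseq[OF z] by (simp add: decseq_Suc_iff)
    ultimately have "lsq_f A b (x k) \<le> K * (bregman_ent z (x k) - bregman_ent z (x (Suc k)))"
      using lsq_f_le_bregman_ent_decrease[OF z, of k] by (meson mult_right_mono order_trans)
    with Suc show ?case by (simp add: algebra_simps)
  qed simp
  also have "\<dots> \<le> K * bregman_ent z (x 0)"
    using K bregman_ent_iterates_nonneg[OF z] by (simp add: mult_left_mono)
  finally show ?thesis by (simp add: K_def)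
qed

lemma min_lsq_f_le:
  assumes z: "z \<in> feasible_set A b"
  shows "Min ((\<lambda>i. lsq_f A b (x i)) ` {0..k})
           \<le> 4 * bregman_ent z (x 0) * (bregman_ent z (x 0) + one_norm z) * max_col_norm_sq A
             / (real k + 1)"
proof -
  define m where "m = Min ((\<lambda>i. lsq_f A b (x i)) ` {0..k})"
  have "(\<Sum>i<Suc k. m) \<le> (\<Sum>i<Suc k. lsq_f A b (x i))"
    by (intro sum_mono) (auto simp: m_def)
  also have "\<dots> \<le> 4 * max_col_norm_sq A * (bregman_ent z (x 0) + one_norm z) * bregman_ent z (x 0)"
    by (rule sum_lsq_f_le[OF z])
  finally show ?thesis by (simp add: m_def field_simps add.commute)
qed

lemma lsq_f_iterates_tendsto_0: "(\<lambda>k. lsq_f A b (x k)) \<longlonglongrightarrow> 0"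
proof -
  obtain z where z: "z \<in> feasible_set A b" using feasible_nonempty by blast
  have "summable (\<lambda>k. lsq_f A b (x k))"
    using sum_lsq_f_le[OF z] lsq_f_nonneg by (intro summableI_nonneg_bounded) auto
  thus ?thesis by (rule summable_LIMSEQ_zero)
qed

lemma iterates_bounded: "bounded (range x)"
proof -
  obtain z where z: "z \<in> feasible_set A b" using feasible_nonempty by blast
  have "norm (x k) \<le> 2 * (bregman_ent z (x 0) + one_norm z)" for k
  proof -
    have "norm (x k) \<le> (\<Sum>i\<in>UNIV. \<bar>x k $ i\<bar>)" by (rule norm_le_l1_cart)
    also have "\<dots> = (\<Sum>i\<in>UNIV. x k $ i)" using iterates_pos[of k] by (simp add: less_imp_le)
    also have "\<dots> \<le> 2 * (bregman_ent z (x k) + one_norm z)"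
      by (rule sum_le_bregman_ent_one_norm[OF feasible_set_nonneg[OF z] iterates_pos])
    also have "\<dots> \<le> 2 * (bregman_ent z (x 0) + one_norm z)"
      using bregman_ent_le_initial[OF z] by simp
    finally show ?thesis .
  qed
  thus ?thesis unfolding bounded_iff by blast
qed

lemma subsequence_limit_feasible:
  assumes "strict_mono r" "(x \<circ> r) \<longlonglongrightarrow> l" shows "l \<in> feasible_set A b"
proof -
  have "0 \<le> l $ i" for i
    by (rule LIMSEQ_le_const[OF tendsto_vec_nth[OF assms(2)]])
       (use iterates_pos in \<open>auto intro: less_imp_le\<close>)
  moreover have "(\<lambda>j. lsq_f A b ((x \<circ> r) j)) \<longlonglongrightarrow> lsq_f A b l"
    unfolding lsq_f_def
    by (intro tendsto_intros bounded_linear.tendsto[OF matrix_vector_mul_bounded_linear assms(2)])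
  with LIMSEQ_subseq_LIMSEQ[OF lsq_f_iterates_tendsto_0 assms(1)] have "lsq_f A b l = 0"
    by (simp add: o_def LIMSEQ_unique)
  ultimately show ?thesis by (simp add: feasible_set_def lsq_f_def)
qed

lemma iterates_converge_to_feasible: "\<exists>l \<in> feasible_set A b. x \<longlonglongrightarrow> l"
proof -
  obtain l r where r: "strict_mono r" and lr: "(x \<circ> r) \<longlonglongrightarrow> l"
    using bounded_imp_convergent_subsequence[OF iterates_bounded] by blast
  have l: "l \<in> feasible_set A b" by (rule subsequence_limit_feasible[OF r lr])
  obtain D where D: "(\<lambda>k. bregman_ent l (x k)) \<longlonglongrightarrow> D"
    using decseq_convergent[OF bregman_ent_decseq[OF l]] bregman_ent_iterates_nonneg[OF l] by metis
  have "((\<lambda>k. bregman_ent l (x k)) \<circ> r) \<longlonglongrightarrow> 0"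
    using tendsto_bregman_ent_limit[OF _ lr] iterates_pos by (simp add: o_def)
  with LIMSEQ_subseq_LIMSEQ[OF D r] have "D = 0" by (rule LIMSEQ_unique)
  with D have "x \<longlonglongrightarrow> l"
    using tendsto_of_bregman_ent_tendsto_0[OF feasible_set_nonneg[OF l] iterates_pos] by simp
  with l show ?thesis by blast
qed

end

theorem theorem4p2:
  fixes A :: "real^'n^'m" and b :: "real^'m" and x :: "nat \<Rightarrow> real^'n"
  assumes nonempty: "feasible_set A b \<noteq> {}"
    and x0_pos: "\<forall>i. x 0 $ i > 0"
    and iter: "\<forall>k. x (Suc k) = hd_update A b (x k)"
  shows "\<exists>xs \<in> feasible_set A b. x \<longlonglongrightarrow> xs \<and>
           (\<forall>k. Min ((\<lambda>i. lsq_f A b (x i)) ` {0..k}) \<le>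
                4 * bregman_ent xs (x 0) * (bregman_ent xs (x 0) + one_norm xs) * max_col_norm_sq A
                / (real k + 1))"
proof -
  interpret hadamard_descent A b x
    using assms by unfold_locales auto
  obtain xs where "xs \<in> feasible_set A b" "x \<longlonglongrightarrow> xs"
    using iterates_converge_to_feasible by blast
  thus ?thesis using min_lsq_f_le by blast
qed

end
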